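(* For simplices $\sigma,\tau$ on $\gamma_d$, we have $\sigma<_{d+1}\tau$ if and only if $\sigma$ and $\tau$ are $(d+2)$-interlacing in such a way that: when $d$ is even, there is such an interlacing sequence beginning with an element of $\sigma$ but none beginning with an element of $\tau$; when $d$ is odd, there is such an interlacing sequence beginning with an element of $\tau$ but none beginning with an element of $\sigma$.
   Context: $\gamma_d=\{(t,t^2,\dots,t^d):t\in\mathbb{R}\}$; points on it are ordered by parameter. A simplex on $\gamma_d$ is a subset $\sigma\subseteq\gamma_d$ with $|\sigma|\le d+1$, identified with $\mathrm{conv}(\sigma)$. Two simplices overlap in $\mathbb{R}^d$ if $\mathrm{conv}(\sigma)\cap\mathrm{conv}(\tau)\supsetneq\mathrm{conv}(\sigma\cap\tau)$. Subsets $\sigma,\tau$ are $k$-interlacing if there are elements $v_1<\dots<v_k$ of $\sigma\cup\tau$ alternating in membership, either $v_1\in\sigma,v_2\in\tau,v_3\in\sigma,\dots$ (beginning with $\sigma$) or $v_1\in\tau,v_2\in\sigma,\dots$ (beginning with $\tau$). For $\sigma=\{\gamma_d(t_1),\dots,\gamma_d(t_k)\}$ the lifting is $\hat\sigma=\{\gamma_{d+1}(t_i)\}$ and the height function $h_\sigma:\mathrm{conv}(\sigma)\to\mathbb{R}$ gives the last coordinate of the point of $\mathrm{conv}(\hat\sigma)$ projecting to $p$. The relation $\sigma<_{d+1}\tau$ holds iff $\sigma$ and $\tau$ overlap in $\mathbb{R}^d$ and $h_\sigma\le h_\tau$ on $\mathrm{conv}(\sigma)\cap\mathrm{conv}(\tau)$.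 *)

theory Defs
  imports Complex_Main
begin

text \<open>Points of R^d are represented as functions nat => real whose coordinates
  with index >= d are zero (coordinate i stores the (i+1)-st coordinate).
  A simplex on gamma_d is represented by its finite set of curve parameters.\<close>

definition gamma :: "nat \<Rightarrow> real \<Rightarrow> (nat \<Rightarrow> real)" where
  "gamma d t = (\<lambda>i. if i < d then t ^ Suc i else 0)"

definition cweights :: "real set \<Rightarrow> (real \<Rightarrow> real) \<Rightarrow> bool" where
  "cweights S w \<longleftrightarrow> (\<forall>t\<in>S. 0 \<le> w t) \<and> (\<Sum>t\<in>S. w t) = 1"

definition sconv :: "nat \<Rightarrow> real set \<Rightarrow> (nat \<Rightarrow> real) set" where
  "sconv d S = {p. \<exists>w. cweights S w \<and> p = (\<lambda>i. \<Sum>t\<in>S. w t * gamma d t i)}"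

definition simplex_on :: "nat \<Rightarrow> real set \<Rightarrow> bool" where
  "simplex_on d S \<longleftrightarrow> finite S \<and> card S \<le> d + 1"

definition overlap :: "nat \<Rightarrow> real set \<Rightarrow> real set \<Rightarrow> bool" where
  "overlap d S T \<longleftrightarrow> sconv d (S \<inter> T) \<subset> sconv d S \<inter> sconv d T"

text \<open>Height function: last (i.e. (d+1)-st) coordinate of the point of
  conv(lifted sigma) in R^(d+1) projecting to p.\<close>
definition height :: "nat \<Rightarrow> real set \<Rightarrow> (nat \<Rightarrow> real) \<Rightarrow> real" where
  "height d S p = (THE h. \<exists>w. cweights S w \<and>
      (\<lambda>i. \<Sum>t\<in>S. w t * gamma (d+1) t i) = (\<lambda>i. if i < d then p i else if i = d then h else 0))"

text \<open>below d S T is the relation S <_{d+1} T for simplices on gamma_d.\<close>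
definition below :: "nat \<Rightarrow> real set \<Rightarrow> real set \<Rightarrow> bool" where
  "below d S T \<longleftrightarrow> overlap d S T \<and>
     (\<forall>p\<in>sconv d S \<inter> sconv d T. height d S p \<le> height d T p)"

definition interlace_from :: "nat \<Rightarrow> real set \<Rightarrow> real set \<Rightarrow> bool" where
  "interlace_from k A B \<longleftrightarrow> (\<exists>v :: nat \<Rightarrow> real.
      (\<forall>i j. i < j \<and> j < k \<longrightarrow> v i < v j) \<and>
      (\<forall>i<k. v i \<in> (if even i then A else B)))"

end

theory Submission
  imports Defs "HOL-Computational_Algebra.Polynomial"
begin

(* A common point p of conv sigma and conv tau has convex weights a on sigma and b on tau whose
   moments of order at most d agree, and h_sigma(p) - h_tau(p) is the difference of their
   (d+1)-st moments; for every monic Q of degree d+1 this equals sum a Q - sum b Q.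
   If there is no decreasing alternating sequence of length d+2 starting in sigma, a greedy
   construction gives such a Q that is <= 0 on sigma, >= 0 on tau and < 0 on sigma - tau, so
   h_sigma <= h_tau, with equality only on conv (sigma Int tau).  Conversely, on a decreasing
   alternating sequence v_0 > ... > v_(d+1) the divided-difference functional has weights of
   alternating sign; its positive and negative parts are convex weights on sigma and tau with
   equal moments up to order d and a larger (d+1)-st moment on sigma, i.e. a common point
   where h_sigma > h_tau.  Reading the sequences upwards accounts for the parity of d. *)

section \<open>Moments and polynomials\<close>

definition moment :: "real set \<Rightarrow> (real \<Rightarrow> real) \<Rightarrow> nat \<Rightarrow> real" where
  "moment S w k = (\<Sum>t\<in>S. w t * t ^ k)"

lemma sum_mult_poly_eq_moments:
  fixes p :: "real poly"
  assumes "degree p \<le> n"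
  shows "(\<Sum>t\<in>S. w t * poly p t) = (\<Sum>k\<le>n. coeff p k * moment S w k)"
proof -
  have "poly p t = (\<Sum>k\<le>n. coeff p k * t ^ k)" for t
    unfolding poly_altdef
    by (rule sum.mono_neutral_left) (use assms in \<open>auto simp: coeff_eq_0\<close>)
  then show ?thesis
    by (simp add: moment_def sum_distrib_left mult_ac sum.swap[of _ S])
qed

lemma sum_mult_poly_diff_eq_top_moment:
  fixes p :: "real poly"
  assumes "\<forall>k<n. moment S a k = moment T b k" and "degree p \<le> n"
  shows "(\<Sum>t\<in>S. a t * poly p t) - (\<Sum>t\<in>T. b t * poly p t)
    = coeff p n * (moment S a n - moment T b n)"
proof -
  have "(\<Sum>t\<in>S. a t * poly p t) - (\<Sum>t\<in>T. b t * poly p t)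
      = (\<Sum>k\<le>n. coeff p k * (moment S a k - moment T b k))"
    by (simp add: sum_mult_poly_eq_moments[OF assms(2)] sum_subtractf right_diff_distrib)
  also have "\<dots> = coeff p n * (moment S a n - moment T b n)"
    using assms(1) by (simp add: lessThan_Suc_atMost[symmetric])
  finally show ?thesis .
qed

lemma weights_eq_if_moments_eq:
  assumes "finite V" "card V \<le> n" "\<forall>k<n. moment V a k = moment V b k" "s \<in> V"
  shows "a s = b s"
proof -
  define p where "p = (\<Prod>t\<in>V-{s}. [:-t, 1:])"
  have "degree p \<le> (\<Sum>t\<in>V-{s}. degree [:-t, 1::real:])"
    unfolding p_def using degree_prod_sum_le[of "V-{s}" "\<lambda>t. [:-t, 1::real:]"] assms(1)
    by (simp add: o_def)
  also have "\<dots> < n"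
    using assms card_gt_0_iff[of V] by (auto simp: card_Diff_singleton)
  finally have "degree p < n" .
  then have "(\<Sum>t\<in>V. a t * poly p t) - (\<Sum>t\<in>V. b t * poly p t) = 0"
    using sum_mult_poly_diff_eq_top_moment[OF assms(3), of p] by (simp add: coeff_eq_0)
  moreover have "(\<Sum>t\<in>V. w t * poly p t) = w s * poly p s" for w
    using assms(1,4) by (subst sum.remove) (auto simp: p_def poly_prod intro!: sum.neutral prod_zero)
  moreover have "poly p s \<noteq> 0"
    using assms(1) by (simp add: p_def poly_prod)
  ultimately show ?thesis by simp
qed

section \<open>Divided differences\<close>

definition divdiff_weight :: "(nat \<Rightarrow> real) \<Rightarrow> nat \<Rightarrow> nat \<Rightarrow> real" where
  "divdiff_weight v n i = 1 / (\<Prod>j\<in>{..<n}-{i}. v i - v j)"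

lemma sum_divdiff_weight_power:
  assumes inj: "inj_on v {..<n}" and "k < n"
  shows "(\<Sum>i<n. divdiff_weight v n i * v i ^ k) = (if k = n - 1 then 1 else 0)"
proof -
  define l where "l i = (\<Prod>j\<in>{..<n}-{i}. [:-v j, 1:])" for i
  define L where "L = (\<Sum>i<n. smult (divdiff_weight v n i * v i ^ k) (l i))"
  have l: "degree (l i) = n - 1 \<and> coeff (l i) (n - 1) = 1" if "i < n" for i
  proof -
    have "degree (l i) = n - 1"
      using that by (simp add: l_def degree_prod_eq_sum_degree)
    moreover have "lead_coeff (l i) = 1"
      by (simp add: l_def lead_coeff_prod)
    ultimately show ?thesis by simp
  qed
  have "degree L \<le> n - 1"
    unfolding L_def by (rule degree_sum_le) (auto intro: order.trans[OF degree_smult_le] simp: l)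
  have l_node: "poly (l i) (v m) = (if i = m then (\<Prod>j\<in>{..<n}-{i}. v i - v j) else 0)"
    if "i < n" "m < n" for i m
    using that by (auto simp: l_def poly_prod)
  have "poly L (v m) = v m ^ k" if "m < n" for m
  proof -
    have "(\<Prod>j\<in>{..<n}-{m}. v m - v j) \<noteq> 0"
      using inj that by (auto simp: inj_on_def)
    then show ?thesis
      using that by (simp add: L_def poly_sum l_node divdiff_weight_def if_distrib sum.delta cong: if_cong)
  qed
  then have "L = monom 1 k"
  proof (intro poly_eqI_degree[where A = "v ` {..<n}"])
    show "degree L < card (v ` {..<n})" "degree (monom (1::real) k) < card (v ` {..<n})"
      using inj \<open>degree L \<le> n - 1\<close> \<open>k < n\<close> by (auto simp: card_image degree_monom_eq)
  qed (auto simp: poly_monom)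
  moreover have "coeff L (n - 1) = (\<Sum>i<n. divdiff_weight v n i * v i ^ k)"
    unfolding L_def coeff_sum coeff_smult using l by (intro sum.cong) auto
  ultimately show ?thesis by (simp add: coeff_monom)
qed

lemma divdiff_weight_sign:
  assumes dec: "\<forall>i j. i < j \<and> j < n \<longrightarrow> v j < v i" and "i < n"
  shows "if even i then 0 < divdiff_weight v n i else divdiff_weight v n i < 0"
proof -
  have split: "{..<n}-{i} = {..<i} \<union> {i<..<n}" using \<open>i < n\<close> by auto
  have "(\<Prod>j\<in>{..<n}-{i}. v i - v j) = (\<Prod>j<i. v i - v j) * (\<Prod>j\<in>{i<..<n}. v i - v j)"
    unfolding split by (rule prod.union_disjoint) auto
  also have "(\<Prod>j<i. v i - v j) = (-1) ^ i * (\<Prod>j<i. v j - v i)"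
    using prod_uminus[of "\<lambda>j. v j - v i" "{..<i}"] by simp
  finally have "(-1) ^ i * (\<Prod>j\<in>{..<n}-{i}. v i - v j)
      = (\<Prod>j<i. v j - v i) * (\<Prod>j\<in>{i<..<n}. v i - v j)"
    by (simp flip: power_add add: power_mult_distrib)
  also have "\<dots> > 0"
    using dec \<open>i < n\<close> by (intro mult_pos_pos prod_pos) auto
  finally show ?thesis
    by (cases "even i") (auto simp: divdiff_weight_def zero_less_mult_iff)
qed

section \<open>Alternating sequences and separating polynomials\<close>

definition interlace_desc :: "nat \<Rightarrow> real set \<Rightarrow> real set \<Rightarrow> bool" where
  "interlace_desc k A B \<longleftrightarrow> (\<exists>v :: nat \<Rightarrow> real.
      (\<forall>i j. i < j \<and> j < k \<longrightarrow> v j < v i) \<and>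
      (\<forall>i<k. v i \<in> (if even i then A else B)))"

lemma exists_increasing_iff_exists_decreasing:
  "(\<exists>v :: nat \<Rightarrow> 'a :: linorder.
      (\<forall>i j. i < j \<and> j < k \<longrightarrow> v i < v j) \<and> (\<forall>i<k. v i \<in> F i)) \<longleftrightarrow>
   (\<exists>w :: nat \<Rightarrow> 'a.
      (\<forall>i j. i < j \<and> j < k \<longrightarrow> w j < w i) \<and> (\<forall>i<k. w i \<in> F (k - 1 - i)))"
proof
  assume "\<exists>v. (\<forall>i j. i < j \<and> j < k \<longrightarrow> v i < v j) \<and> (\<forall>i<k. v i \<in> F i)"
  then obtain v where v: "\<forall>i j. i < j \<and> j < k \<longrightarrow> v i < v j" "\<forall>i<k. v i \<in> F i"
    by blast
  have "v (k - 1 - j) < v (k - 1 - i)" if "i < j" "j < k" for i j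
    using v(1)[rule_format, of "k - 1 - j" "k - 1 - i"] that by simp
  with v(2) show "\<exists>w. (\<forall>i j. i < j \<and> j < k \<longrightarrow> w j < w i) \<and> (\<forall>i<k. w i \<in> F (k - 1 - i))"
    by (intro exI[of _ "\<lambda>i. v (k - 1 - i)"]) auto
next
  assume "\<exists>w. (\<forall>i j. i < j \<and> j < k \<longrightarrow> w j < w i) \<and> (\<forall>i<k. w i \<in> F (k - 1 - i))"
  then obtain w where w: "\<forall>i j. i < j \<and> j < k \<longrightarrow> w j < w i" "\<forall>i<k. w i \<in> F (k - 1 - i)"
    by blast
  have "w (k - 1 - i) \<in> F i" if "i < k" for i
    using w(2)[rule_format, of "k - 1 - i"] that by simp
  with w(1) show "\<exists>v. (\<forall>i j. i < j \<and> j < k \<longrightarrow> v i < v j) \<and> (\<forall>i<k. v i \<in> F i)"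
    by (intro exI[of _ "\<lambda>i. w (k - 1 - i)"]) auto
qed

lemma interlace_from_iff_interlace_desc:
  "interlace_from k A B \<longleftrightarrow> (if even k then interlace_desc k B A else interlace_desc k A B)"
proof -
  have "(if even (k - 1 - i) then A else B) =
      (if even i then (if even k then B else A) else (if even k then A else B))" if "i < k" for i
  proof -
    have "even (k - 1 - i) \<longleftrightarrow> (even k \<longleftrightarrow> odd i)"
      using that by presburger
    then show ?thesis by auto
  qed
  then have "interlace_from k A B \<longleftrightarrow> (\<exists>w :: nat \<Rightarrow> real. (\<forall>i j. i < j \<and> j < k \<longrightarrow> w j < w i) \<and>
      (\<forall>i<k. w i \<in> (if even i then (if even k then B else A) else (if even k then A else B))))"
    unfolding interlace_from_def exists_increasing_iff_exists_decreasing
    by (intro ex_cong1 conj_cong refl all_cong1 imp_cong) auto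
  then show ?thesis
    unfolding interlace_desc_def by (cases "even k") auto
qed

lemma interlace_desc_Suc:
  assumes "a \<in> A" and "interlace_desc k {b\<in>B. b < a} (A \<union> {b\<in>B. a < b})"
  shows "interlace_desc (Suc k) A B"
proof -
  obtain v where dec: "\<forall>i j. i < j \<and> j < k \<longrightarrow> v j < v i"
    and mem: "\<forall>i<k. v i \<in> (if even i then {b\<in>B. b < a} else A \<union> {b\<in>B. a < b})"
    using assms(2) unfolding interlace_desc_def by blast
  have below: "v i < a" if "i < k" for i
  proof -
    have "v 0 < a" using mem that by auto
    moreover have "v i \<le> v 0" using dec[rule_format, of 0 i] that by (cases "i = 0") auto
    ultimately show ?thesis by linarith
  qed
  show ?thesis
    unfolding interlace_desc_def
  proof (intro exI[of _ "case_nat a v"] conjI allI impI)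
    fix i j assume "i < j \<and> j < Suc k"
    then show "case_nat a v j < case_nat a v i"
      using dec below by (cases i; cases j) auto
  next
    fix i assume "i < Suc k"
    then show "case_nat a v i \<in> (if even i then A else B)"
    proof (cases i)
      case (Suc i')
      then show ?thesis using mem[rule_format, of i'] below[of i'] \<open>i < Suc k\<close> by auto
    qed (use assms(1) in simp)
  qed
qed

definition separates :: "real poly \<Rightarrow> real set \<Rightarrow> real set \<Rightarrow> bool" where
  "separates Q A B \<longleftrightarrow> (\<forall>u\<in>A \<inter> B. poly Q u = 0) \<and> (\<forall>u\<in>A - B. poly Q u < 0) \<and>
     (\<forall>u\<in>B - A. 0 < poly Q u)"

lemma separates_linear_factor:
  assumes "finite B" "\<forall>x\<in>A. x \<le> a" "a \<notin> B - A"
    and Q: "separates Q {b\<in>B. b < a} (A \<union> {b\<in>B. a < b})"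
  shows "\<exists>r. separates ([:-r, 1:] * Q) A B"
proof -
  define c where "c = Min (insert (a + 1) {b\<in>B. a < b})"
  have c: "a < c" "\<forall>b\<in>B. a < b \<longrightarrow> c \<le> b"
    using assms(1) by (auto simp: c_def)
  \<comment> \<open>The factor \<open>x - r\<close> flips signs exactly below \<open>r\<close>, where the roles of \<open>A\<close> and \<open>B\<close> swap.\<close>
  define r where "r = (if a \<in> B then a else (a + c) / 2)"
  have r: "a \<le> r" "a \<in> B \<Longrightarrow> r = a" "a \<notin> B \<Longrightarrow> a < r" "\<forall>b\<in>B. a < b \<longrightarrow> r < b"
    using c by (auto simp: r_def)
  have "separates ([:-r, 1:] * Q) A B"
    unfolding separates_def
  proof (intro conjI ballI)
    fix u assume "u \<in> A \<inter> B"
    then have "u = a \<or> u \<in> {b\<in>B. b < a} \<inter> (A \<union> {b\<in>B. a < b})"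
      using assms(2) by force
    then show "poly ([:-r, 1:] * Q) u = 0"
      using Q r \<open>u \<in> A \<inter> B\<close> by (auto simp: separates_def)
  next
    fix u assume u: "u \<in> A - B"
    then have "u < r" using assms(2) r by force
    moreover have "0 < poly Q u" using u Q by (auto simp: separates_def)
    ultimately show "poly ([:-r, 1:] * Q) u < 0" by (simp add: mult_neg_pos)
  next
    fix u assume u: "u \<in> B - A"
    then consider "u < a" | "a < u" using assms(3) by fastforce
    then show "0 < poly ([:-r, 1:] * Q) u"
    proof cases
      case 1
      then have "u < r" "poly Q u < 0" using u r Q by (auto simp: separates_def)
      then show ?thesis by (simp add: mult_neg_neg)
    next
      case 2
      then have "r < u" "0 < poly Q u" using u r Q by (auto simp: separates_def)
      then show ?thesis by simp
    qed
  qed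
  then show ?thesis ..
qed

lemma not_interlace_desc_Suc_empty: "\<not> interlace_desc (Suc k) {} B"
  unfolding interlace_desc_def by (metis empty_iff even_zero zero_less_Suc)

lemma separating_polynomial_if_not_interlace_desc:
  assumes "\<not> interlace_desc (Suc m) A B" "finite A" "finite B"
  shows "\<exists>Q. degree Q = m \<and> lead_coeff Q = 1 \<and> separates Q A B"
  using assms
proof (induction m arbitrary: A B)
  case 0
  have "A = {}"
  proof (rule ccontr)
    assume "A \<noteq> {}"
    then obtain a where "a \<in> A" by blast
    then have "interlace_desc 1 A B"
      unfolding interlace_desc_def by (intro exI[of _ "\<lambda>_. a"]) auto
    with 0 show False by simp
  qed
  then show ?case by (intro exI[of _ 1]) (simp add: separates_def)
next
  case (Suc m)
  obtain a where a: "\<forall>x\<in>A. x \<le> a" "a \<notin> B - A"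
    and no_interlace: "\<not> interlace_desc (Suc m) {b\<in>B. b < a} (A \<union> {b\<in>B. a < b})"
  proof (cases "A = {}")
    case True
    have below_B: "\<forall>b\<in>B. Min B - 1 < b"
      using Min_le[OF Suc.prems(3)] by fastforce
    then have none_below: "{b\<in>B. b < Min B - 1} = {}" by auto
    have "\<not> interlace_desc (Suc m) {b\<in>B. b < Min B - 1} (A \<union> {b\<in>B. Min B - 1 < b})"
      unfolding none_below by (rule not_interlace_desc_Suc_empty)
    with below_B True show ?thesis
      by (intro that[of "Min B - 1"]) auto
  next
    case False
    then have "Max A \<in> A" using Suc.prems(2) by simp
    then have "\<not> interlace_desc (Suc m) {b\<in>B. b < Max A} (A \<union> {b\<in>B. Max A < b})"
      using interlace_desc_Suc Suc.prems(1) by blast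
    moreover have "\<forall>x\<in>A. x \<le> Max A" using Suc.prems(2) by simp
    ultimately show ?thesis
      using \<open>Max A \<in> A\<close> by (intro that) auto
  qed
  obtain Q where Q: "degree Q = m" "lead_coeff Q = 1" "separates Q {b\<in>B. b < a} (A \<union> {b\<in>B. a < b})"
    using Suc.IH[OF no_interlace] Suc.prems(2,3) by auto
  obtain r where "separates ([:-r, 1:] * Q) A B"
    using separates_linear_factor[OF Suc.prems(3) a Q(3)] by blast
  moreover have "degree ([:-r, 1:] * Q) = Suc m"
    using Q(1,2) by (subst degree_mult_eq) auto
  moreover have "lead_coeff ([:-r, 1:] * Q) = 1"
    using Q(2) by (subst lead_coeff_mult) simp
  ultimately show ?case by blast
qed

lemma moment_le_if_not_interlace_desc:
  assumes "\<not> interlace_desc (m + 2) S T" "finite S" "finite T"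
    and "\<forall>t\<in>S. 0 \<le> a t" "\<forall>t\<in>T. 0 \<le> b t" "\<forall>k\<le>m. moment S a k = moment T b k"
  shows "moment S a (m + 1) \<le> moment T b (m + 1)"
    and "moment S a (m + 1) = moment T b (m + 1) \<Longrightarrow> \<forall>t\<in>S - T. a t = 0"
proof -
  obtain Q where Q: "degree Q = m + 1" "lead_coeff Q = 1" "separates Q S T"
    using separating_polynomial_if_not_interlace_desc[of "m + 1" S T] assms(1-3) by auto
  have diff: "(\<Sum>t\<in>S. a t * poly Q t) - (\<Sum>t\<in>T. b t * poly Q t)
      = moment S a (m + 1) - moment T b (m + 1)"
    using sum_mult_poly_diff_eq_top_moment[of "m + 1" S a T b Q] assms(6) Q(1,2)
    by (simp add: less_Suc_eq_le)
  have S_nonpos: "a t * poly Q t \<le> 0" if "t \<in> S" for t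
    using Q(3) assms(4) that
    by (cases "t \<in> T") (auto simp: separates_def intro: mult_nonneg_nonpos[OF _ less_imp_le])
  have T_nonneg: "0 \<le> b t * poly Q t" if "t \<in> T" for t
    using Q(3) assms(5) that
    by (cases "t \<in> S") (auto simp: separates_def intro: mult_nonneg_nonneg[OF _ less_imp_le])
  have sums: "(\<Sum>t\<in>S. a t * poly Q t) \<le> 0" "0 \<le> (\<Sum>t\<in>T. b t * poly Q t)"
    using S_nonpos T_nonneg by (auto intro: sum_nonpos sum_nonneg)
  with diff show "moment S a (m + 1) \<le> moment T b (m + 1)" by linarith
  assume "moment S a (m + 1) = moment T b (m + 1)"
  with diff sums have "(\<Sum>t\<in>S. - (a t * poly Q t)) = 0"
    by (simp add: sum_negf)
  moreover have "(\<Sum>t\<in>S. - (a t * poly Q t)) = 0 \<longleftrightarrow> (\<forall>t\<in>S. - (a t * poly Q t) = 0)"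
    by (rule sum_nonneg_eq_0_iff[OF assms(2)]) (simp add: S_nonpos)
  ultimately have products_zero: "\<forall>t\<in>S. a t * poly Q t = 0"
    by simp
  show "\<forall>t\<in>S - T. a t = 0"
  proof
    fix t assume "t \<in> S - T"
    then have "poly Q t < 0" using Q(3) unfolding separates_def by blast
    with products_zero[rule_format, of t] \<open>t \<in> S - T\<close> show "a t = 0" by simp
  qed
qed

lemma moment_pushforward:
  assumes "finite S" "\<forall>i\<in>I. P i \<longrightarrow> v i \<in> S"
  shows "moment S (\<lambda>u. \<Sum>i\<in>I. if P i \<and> v i = u then w i else 0) k
    = (\<Sum>i\<in>I. if P i then w i * v i ^ k else 0)"
proof -
  have "moment S (\<lambda>u. \<Sum>i\<in>I. if P i \<and> v i = u then w i else 0) k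
      = (\<Sum>i\<in>I. \<Sum>u\<in>S. if P i \<and> v i = u then w i * u ^ k else 0)"
    unfolding moment_def sum_distrib_right by (subst sum.swap) (auto intro!: sum.cong)
  also have "\<dots> = (\<Sum>i\<in>I. if P i then w i * v i ^ k else 0)"
    using assms by (intro sum.cong) (auto simp: sum.delta' cong: if_cong)
  finally show ?thesis .
qed

lemma divdiff_weights_of_interlace_desc:
  assumes "interlace_desc n S T"
  obtains v c where "\<forall>i<n. v i \<in> (if even i then S else T)"
    and "\<forall>i<n. if even i then 0 < c i else c i < 0"
    and "\<forall>k<n. (\<Sum>i<n. c i * v i ^ k) = (if k = n - 1 then 1 else 0)"
proof -
  obtain v where dec: "\<forall>i j. i < j \<and> j < n \<longrightarrow> v j < v i"
    and mem: "\<forall>i<n. v i \<in> (if even i then S else T)"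
    using assms unfolding interlace_desc_def by blast
  have "inj_on v {..<n}"
  proof (rule inj_onI)
    fix i j assume "i \<in> {..<n}" "j \<in> {..<n}" "v i = v j"
    then show "i = j"
      using dec[rule_format, of i j] dec[rule_format, of j i] by (cases i j rule: linorder_cases) auto
  qed
  have sign: "\<forall>i<n. if even i then 0 < divdiff_weight v n i else divdiff_weight v n i < 0"
    using divdiff_weight_sign[OF dec] by blast
  have moments: "\<forall>k<n. (\<Sum>i<n. divdiff_weight v n i * v i ^ k) = (if k = n - 1 then 1 else 0)"
    using sum_divdiff_weight_power[OF \<open>inj_on v {..<n}\<close>] by blast
  show thesis
    by (rule that[OF mem sign moments])
qed

lemma moments_separated_if_interlace_desc:
  assumes "interlace_desc (m + 2) S T" "finite S" "finite T"
  shows "\<exists>a b. cweights S a \<and> cweights T b \<and> (\<forall>k\<le>m. moment S a k = moment T b k) \<and>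
    moment T b (m + 1) < moment S a (m + 1)"
proof -
  define n where "n = m + 2"
  obtain v c where mem: "\<forall>i<n. v i \<in> (if even i then S else T)"
    and sign: "\<forall>i<n. if even i then 0 < c i else c i < 0"
    and c_moments: "\<forall>k<n. (\<Sum>i<n. c i * v i ^ k) = (if k = n - 1 then 1 else 0)"
    using divdiff_weights_of_interlace_desc assms(1) unfolding n_def by blast
  define Z where "Z = (\<Sum>i<n. if even i then c i else 0)"
  have "0 < Z"
    unfolding Z_def by (rule sum_pos2[of _ 0]) (use sign in \<open>auto simp: n_def less_imp_le\<close>)
  \<comment> \<open>The positive part of the functional \<open>c\<close> lives on \<open>S\<close>, its negative part on \<open>T\<close>.\<close>
  define a where "a u = (\<Sum>i<n. if even i \<and> v i = u then c i / Z else 0)" for u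
  define b where "b u = (\<Sum>i<n. if odd i \<and> v i = u then - c i / Z else 0)" for u
  have moment_a: "moment S a k = (\<Sum>i<n. if even i then c i / Z * v i ^ k else 0)" for k
    unfolding a_def by (rule moment_pushforward) (use assms(2) mem in auto)
  have moment_b: "moment T b k = (\<Sum>i<n. if odd i then - c i / Z * v i ^ k else 0)" for k
    unfolding b_def by (rule moment_pushforward) (use assms(3) mem in auto)
  have moment_diff: "moment S a k - moment T b k = (if k = n - 1 then 1 / Z else 0)" if "k < n" for k
  proof -
    have "moment S a k - moment T b k = (\<Sum>i<n. c i * v i ^ k) / Z"
      unfolding moment_a moment_b sum_subtractf[symmetric] sum_divide_distrib
      by (intro sum.cong) auto
    then show ?thesis using c_moments that by simp
  qed
  have "cweights S a"
    unfolding cweights_def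
  proof
    show "\<forall>t\<in>S. 0 \<le> a t"
      unfolding a_def using sign \<open>0 < Z\<close> by (auto intro!: sum_nonneg simp: less_imp_le)
    have "(\<Sum>t\<in>S. a t) = moment S a 0" by (simp add: moment_def)
    also have "\<dots> = Z / Z"
      unfolding moment_a Z_def sum_divide_distrib by (intro sum.cong) auto
    finally show "(\<Sum>t\<in>S. a t) = 1" using \<open>0 < Z\<close> by simp
  qed
  moreover have "cweights T b"
    unfolding cweights_def
  proof
    show "\<forall>t\<in>T. 0 \<le> b t"
      unfolding b_def using sign \<open>0 < Z\<close>
      by (auto intro!: sum_nonneg divide_nonpos_pos simp: less_imp_le)
    show "(\<Sum>t\<in>T. b t) = 1"
      using moment_diff[of 0] \<open>cweights S a\<close> by (simp add: n_def moment_def cweights_def)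
  qed
  moreover have "moment S a k = moment T b k" if "k \<le> m" for k
    using moment_diff[of k] that by (simp add: n_def)
  moreover have "moment T b (m + 1) < moment S a (m + 1)"
  proof -
    have "moment S a (m + 1) - moment T b (m + 1) = 1 / Z"
      using moment_diff[of "m + 1"] by (simp add: n_def)
    with \<open>0 < Z\<close> show ?thesis by (smt (verit) divide_pos_pos)
  qed
  ultimately show ?thesis by blast
qed

section \<open>Convex hulls and heights on the moment curve\<close>

definition moment_vector :: "nat \<Rightarrow> real set \<Rightarrow> (real \<Rightarrow> real) \<Rightarrow> nat \<Rightarrow> real" where
  "moment_vector d S w = (\<lambda>i. if i < d then moment S w (Suc i) else 0)"

lemma sum_gamma_eq_moment_vector: "(\<lambda>i. \<Sum>t\<in>S. w t * gamma d t i) = moment_vector d S w"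
  by (auto simp: gamma_def moment_vector_def moment_def)

lemma sconv_iff: "p \<in> sconv d S \<longleftrightarrow> (\<exists>w. cweights S w \<and> p = moment_vector d S w)"
  by (simp add: sconv_def sum_gamma_eq_moment_vector)

lemma moment_vector_eq_iff:
  assumes "cweights S a" "cweights T b"
  shows "moment_vector d S a = moment_vector d T b \<longleftrightarrow> (\<forall>k\<le>d. moment S a k = moment T b k)"
proof
  assume eq: "moment_vector d S a = moment_vector d T b"
  show "\<forall>k\<le>d. moment S a k = moment T b k"
  proof (intro allI impI)
    fix k assume "k \<le> d"
    then show "moment S a k = moment T b k"
      using assms fun_cong[OF eq, of "k - 1"]
      by (cases k) (auto simp: moment_vector_def moment_def cweights_def)
  qed
qed (auto simp: moment_vector_def)

lemma weights_eq_if_moment_vector_eq: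
  assumes "simplex_on d S" "cweights S w" "cweights S w'" "moment_vector d S w = moment_vector d S w'"
  shows "\<forall>t\<in>S. w t = w' t"
  using assms weights_eq_if_moments_eq[of S "d + 1" w w']
  by (auto simp: simplex_on_def moment_vector_eq_iff less_Suc_eq_le)

lemma height_moment_vector:
  assumes "simplex_on d S" "cweights S w"
  shows "height d S (moment_vector d S w) = moment S w (d + 1)"
  unfolding height_def sum_gamma_eq_moment_vector
proof (rule the_equality)
  show "\<exists>w'. cweights S w' \<and> moment_vector (d + 1) S w' =
      (\<lambda>i. if i < d then moment_vector d S w i else if i = d then moment S w (d + 1) else 0)"
    using assms(2) by (intro exI[of _ w]) (auto simp: moment_vector_def)
next
  fix h assume "\<exists>w'. cweights S w' \<and> moment_vector (d + 1) S w' =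
      (\<lambda>i. if i < d then moment_vector d S w i else if i = d then h else 0)"
  then obtain w' where w': "cweights S w'"
    and lift: "moment_vector (d + 1) S w' = (\<lambda>i. if i < d then moment_vector d S w i else if i = d then h else 0)"
    by blast
  have "moment_vector d S w' = moment_vector d S w"
  proof
    fix i
    show "moment_vector d S w' i = moment_vector d S w i"
      using fun_cong[OF lift, of i] by (cases "i < d") (simp_all add: moment_vector_def)
  qed
  then have "\<forall>t\<in>S. w' t = w t"
    using weights_eq_if_moment_vector_eq[OF assms(1) w' assms(2)] by blast
  then have "moment S w' (d + 1) = moment S w (d + 1)"
    by (simp add: moment_def)
  moreover have "h = moment S w' (d + 1)"
    using fun_cong[OF lift, of d] by (simp add: moment_vector_def)
  ultimately show "h = moment S w (d + 1)" by simp
qed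

lemma cweights_moment_vanishing_outside:
  assumes "finite S" "A \<subseteq> S" "\<forall>t\<in>S - A. w t = 0"
  shows "cweights S w \<longleftrightarrow> cweights A w" and "moment S w k = moment A w k"
proof -
  have sums: "(\<Sum>t\<in>S. w t * f t) = (\<Sum>t\<in>A. w t * f t)" for f :: "real \<Rightarrow> real"
    using assms by (intro sum.mono_neutral_right) auto
  show "cweights S w \<longleftrightarrow> cweights A w"
    using sums[of "\<lambda>_. 1"] assms(2,3) by (auto simp: cweights_def)
  show "moment S w k = moment A w k"
    using sums by (simp add: moment_def)
qed

lemma sconv_height_subset:
  assumes "simplex_on d S" "A \<subseteq> S" "p \<in> sconv d A"
  shows "p \<in> sconv d S" and "height d S p = height d A p"
proof -
  have "finite S" using assms(1) by (simp add: simplex_on_def)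
  have "simplex_on d A"
    using assms(1,2) card_mono[of S A] by (auto simp: simplex_on_def intro: finite_subset)
  obtain w where w: "cweights A w" "p = moment_vector d A w"
    using assms(3) by (auto simp: sconv_iff)
  define w' where "w' t = (if t \<in> A then w t else 0)" for t
  have "cweights A w'" "moment A w' k = moment A w k" for k
    using w(1) by (simp_all add: cweights_def moment_def w'_def)
  moreover have "\<forall>t\<in>S - A. w' t = 0" by (simp add: w'_def)
  note vanishing = cweights_moment_vanishing_outside[OF \<open>finite S\<close> assms(2) this]
  ultimately have "cweights S w'" and moments: "moment S w' k = moment A w k" for k
    by (simp_all add: vanishing)
  have "moment_vector d S w' = p"
    unfolding w(2) moment_vector_def moments ..
  then show "p \<in> sconv d S"
    using \<open>cweights S w'\<close> by (auto simp: sconv_iff)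
  show "height d S p = height d A p"
    using height_moment_vector[OF assms(1) \<open>cweights S w'\<close>] height_moment_vector[OF \<open>simplex_on d A\<close> w(1)]
      \<open>moment_vector d S w' = p\<close> w(2) moments by simp
qed

lemma height_eq_if_sconv_Int:
  assumes "simplex_on d S" "simplex_on d T" "p \<in> sconv d (S \<inter> T)"
  shows "height d S p = height d T p"
  using sconv_height_subset(2)[OF assms(1) _ assms(3)] sconv_height_subset(2)[OF assms(2) _ assms(3)]
  by simp

lemma overlap_iff:
  assumes "simplex_on d S" "simplex_on d T"
  shows "overlap d S T \<longleftrightarrow> (\<exists>p\<in>sconv d S \<inter> sconv d T. p \<notin> sconv d (S \<inter> T))"
proof -
  have "sconv d (S \<inter> T) \<subseteq> sconv d S \<inter> sconv d T"
    using sconv_height_subset(1)[OF assms(1) Int_lower1] sconv_height_subset(1)[OF assms(2) Int_lower2]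
    by blast
  then show ?thesis by (auto simp: overlap_def)
qed

lemma height_le_if_not_interlace_desc:
  assumes S: "simplex_on d S" and T: "simplex_on d T"
    and "\<not> interlace_desc (d + 2) S T" "p \<in> sconv d S \<inter> sconv d T"
  shows "height d S p \<le> height d T p"
    and "height d S p = height d T p \<Longrightarrow> p \<in> sconv d (S \<inter> T)"
proof -
  obtain a b where a: "cweights S a" "p = moment_vector d S a"
    and b: "cweights T b" "p = moment_vector d T b"
    using assms(4) by (auto simp: sconv_iff)
  have heights: "height d S p = moment S a (d + 1)" "height d T p = moment T b (d + 1)"
    using height_moment_vector[OF S a(1)] height_moment_vector[OF T b(1)]
    by (simp_all flip: a(2) b(2))
  have "\<forall>k\<le>d. moment S a k = moment T b k"
    using moment_vector_eq_iff[OF a(1) b(1), of d] a(2) b(2) by simp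
  note moment_le = moment_le_if_not_interlace_desc[OF assms(3) _ _ _ _ this]
  have "finite S" "finite T" using S T by (simp_all add: simplex_on_def)
  moreover have "\<forall>t\<in>S. 0 \<le> a t" "\<forall>t\<in>T. 0 \<le> b t"
    using a(1) b(1) by (simp_all add: cweights_def)
  ultimately show "height d S p \<le> height d T p"
    using moment_le(1) heights by simp
  assume "height d S p = height d T p"
  then have "\<forall>t\<in>S - (S \<inter> T). a t = 0"
    using moment_le(2) heights \<open>finite S\<close> \<open>finite T\<close> \<open>\<forall>t\<in>S. 0 \<le> a t\<close> \<open>\<forall>t\<in>T. 0 \<le> b t\<close>
    by auto
  note vanishing = cweights_moment_vanishing_outside[OF \<open>finite S\<close> _ this]
  have "cweights (S \<inter> T) a" using a(1) vanishing(1) by blast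
  moreover have "moment_vector d (S \<inter> T) a = p"
    unfolding a(2) moment_vector_def vanishing(2)[symmetric, OF Int_lower1] ..
  ultimately show "p \<in> sconv d (S \<inter> T)"
    by (auto simp: sconv_iff)
qed

lemma height_gt_if_interlace_desc:
  assumes S: "simplex_on d S" and T: "simplex_on d T" and "interlace_desc (d + 2) S T"
  shows "\<exists>p\<in>sconv d S \<inter> sconv d T. height d T p < height d S p"
proof -
  obtain a b where a: "cweights S a" and b: "cweights T b"
    and "\<forall>k\<le>d. moment S a k = moment T b k" and gt: "moment T b (d + 1) < moment S a (d + 1)"
    using moments_separated_if_interlace_desc[OF assms(3)] S T by (auto simp: simplex_on_def)
  then have "moment_vector d S a = moment_vector d T b"
    using moment_vector_eq_iff[OF a b] by blast
  then have "moment_vector d S a \<in> sconv d S \<inter> sconv d T"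
    using a b by (auto simp: sconv_iff)
  moreover have "height d T (moment_vector d S a) < height d S (moment_vector d S a)"
    using height_moment_vector[OF S a] height_moment_vector[OF T b] gt
      \<open>moment_vector d S a = moment_vector d T b\<close> by simp
  ultimately show ?thesis by blast
qed

lemma below_iff_interlace_desc:
  assumes S: "simplex_on d S" and T: "simplex_on d T"
  shows "below d S T \<longleftrightarrow> interlace_desc (d + 2) T S \<and> \<not> interlace_desc (d + 2) S T"
proof
  assume "below d S T"
  then have overlap: "overlap d S T"
    and le: "\<forall>p\<in>sconv d S \<inter> sconv d T. height d S p \<le> height d T p"
    by (auto simp: below_def)
  have "\<not> interlace_desc (d + 2) S T"
    using height_gt_if_interlace_desc[OF S T] le by force
  moreover have "interlace_desc (d + 2) T S"
  proof (rule ccontr)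
    assume no_interlace: "\<not> interlace_desc (d + 2) T S"
    obtain p where p: "p \<in> sconv d T \<inter> sconv d S" "p \<notin> sconv d (T \<inter> S)"
      using overlap overlap_iff[OF S T] by (auto simp: Int_commute)
    note height_le = height_le_if_not_interlace_desc[OF T S no_interlace p(1)]
    have "height d T p = height d S p"
      using height_le(1) le p(1) by force
    with height_le(2) p(2) show False by blast
  qed
  ultimately show "interlace_desc (d + 2) T S \<and> \<not> interlace_desc (d + 2) S T" by blast
next
  assume interlace: "interlace_desc (d + 2) T S \<and> \<not> interlace_desc (d + 2) S T"
  obtain p where p: "p \<in> sconv d T \<inter> sconv d S" "height d S p < height d T p"
    using height_gt_if_interlace_desc[OF T S] interlace by blast
  then have "p \<notin> sconv d (S \<inter> T)"
    using height_eq_if_sconv_Int[OF S T] by force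
  with p(1) have "overlap d S T"
    using overlap_iff[OF S T] by blast
  moreover have "\<forall>p\<in>sconv d S \<inter> sconv d T. height d S p \<le> height d T p"
    using height_le_if_not_interlace_desc(1)[OF S T] interlace by blast
  ultimately show "below d S T" by (simp add: below_def)
qed

theorem proposition2p4:
  fixes d :: nat and S T :: "real set"
  assumes "1 \<le> d" and "simplex_on d S" and "simplex_on d T"
  shows "below d S T \<longleftrightarrow>
    (if even d then interlace_from (d+2) S T \<and> \<not> interlace_from (d+2) T S
     else interlace_from (d+2) T S \<and> \<not> interlace_from (d+2) S T)"
  using below_iff_interlace_desc[OF assms(2,3)]
    interlace_from_iff_interlace_desc[of "d + 2" S T] interlace_from_iff_interlace_desc[of "d + 2" T S]
  by auto

end
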